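(* For a probability measure $\mu$ on $(0,\infty)$ and real $p$, let $\mu_p:=\int_{(0,\infty)}x^{p-2}\,\mu(\mathrm{d}x)$, let $L_\mu(d):=\int_{(0,\infty)}\min\!\big(1,\tfrac{d}{x}\big)\,\mu(\mathrm{d}x)$ for $d>0$, and for $c\in(0,1)$ let $\delta_\mu$ denote the unique root $d\in(0,\infty)$ of $L_\mu(d)=c$. Then: (I) For any $c\in(0,\tfrac12]$ and any real $\mu_{3*}>0$, there exists a probability measure $\mu$ on $(0,\infty)$ with $\mu_3=\mu_{3*}$ and $\delta_\mu=c\,\mu_{3*}$. (II) For any $c\in(\tfrac12,1)$ and any real $\mu_{3*}>0$, $\mu_{1*}>0$ with $\mu_{3*}\mu_{1*}\ge1$, there exists a probability measure $\mu$ on $(0,\infty)$ with $\mu_3=\mu_{3*}$, $\mu_1=\mu_{1*}$, and $$\delta_\mu=\frac{\mu_{3*}-(2c-1)^2/\mu_{1*}}{4(1-c)}.$$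
   Context: $\mu_1=\int_{(0,\infty)}x^{-1}\,\mu(\mathrm{d}x)$ and $\mu_3=\int_{(0,\infty)}x\,\mu(\mathrm{d}x)$. For every probability measure $\mu$ on $(0,\infty)$ and $c\in(0,1)$ the equation $L_\mu(d)=c$ has a unique root in $(0,\infty)$. *)

theory Defs
  imports "HOL-Probability.Probability"
begin

definition prob_on_pos :: "real measure \<Rightarrow> bool" where
  "prob_on_pos M \<longleftrightarrow> prob_space M \<and> sets M = sets borel \<and> emeasure M {0<..} = 1"

definition mom :: "real measure \<Rightarrow> real \<Rightarrow> ennreal" where
  "mom M p = (\<integral>\<^sup>+ x. indicator {0<..} x * ennreal (x powr (p - 2)) \<partial>M)"

definition Lmu :: "real measure \<Rightarrow> real \<Rightarrow> real" where
  "Lmu M d = (\<integral> x. indicator {0<..} x * min 1 (d / x) \<partial>M)"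

definition delta :: "real measure \<Rightarrow> real \<Rightarrow> real" where
  "delta M c = (THE d. d > 0 \<and> Lmu M d = c)"

end

theory Submission
  imports Defs
begin

text \<open>For every law \<open>\<mu>\<close> on \<open>(0,\<infinity>)\<close> the function \<open>L\<^sub>\<mu>\<close> is strictly increasing as long as
  it stays below 1, so a root of \<open>L\<^sub>\<mu>(d) = c < 1\<close> is the root \<open>\<delta>\<^sub>\<mu>\<close>. Both parts are then
  realised by laws with at most two atoms: in (I) the point mass at \<open>\<mu>\<^sub>3\<^sub>*\<close>, whose
  \<open>L\<close> is \<open>min 1 (d/\<mu>\<^sub>3\<^sub>*)\<close>; in (II) a law with mass \<open>p\<close> at \<open>a\<close> and \<open>1 - p\<close> at \<open>b > a\<close>,
  with \<open>p, a, b\<close> solving the two moment equations and chosen so that the root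
  is the midpoint \<open>(a + b)/2\<close>, where \<open>L(d) = p + (1 - p) d/b\<close>.\<close>

lemma Lmu_integrable:
  assumes M: "prob_on_pos M" and d: "0 \<le> d"
  shows "integrable M (\<lambda>x. indicator {0<..} x * min 1 (d / x))"
proof -
  interpret prob_space M using M by (simp add: prob_on_pos_def)
  have "(\<lambda>x. indicator {0<..} x * min 1 (d / x)) \<in> borel_measurable borel"
    by measurable
  then have "(\<lambda>x. indicator {0<..} x * min 1 (d / x)) \<in> borel_measurable M"
    using M by (simp add: prob_on_pos_def measurable_cong_sets[OF _ refl, of M borel])
  moreover have "norm (indicator {0<..} x * min 1 (d / x)) \<le> 1" for x :: real
    using d by (cases "0 < x") auto
  ultimately show ?thesis
    by (intro integrable_const_bound[where B=1]) auto
qed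

lemma Lmu_strict_mono:
  assumes M: "prob_on_pos M" and d: "0 < d" "d < d'" and below: "Lmu M d < 1"
  shows "Lmu M d < Lmu M d'"
proof -
  interpret prob_space M using M by (simp add: prob_on_pos_def)
  have sets: "sets M = sets borel" using M by (simp add: prob_on_pos_def)
  have pos: "emeasure M {d<..} \<noteq> 0"
  proof
    assume "emeasure M {d<..} = 0"
    then have "AE x in M. x \<notin> {d<..}"
      using sets by (intro AE_not_in) (simp add: null_sets_def)
    moreover have "AE x in M. x \<in> {0<..}"
      using M sets by (intro AE_prob_1) (simp_all add: prob_on_pos_def emeasure_eq_measure)
    ultimately have "AE x in M. indicator {0<..} x * min 1 (d / x) = 1"
      by eventually_elim auto
    then have "Lmu M d = (\<integral>x. 1 \<partial>M)"
      unfolding Lmu_def using Lmu_integrable[OF M, of d] d(1)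
      by (intro integral_cong_AE) auto
    then have "Lmu M d = 1" by (simp add: prob_space)
    with below show False by simp
  qed
  show ?thesis
    unfolding Lmu_def
  proof (rule integral_less_AE[where A="{d<..}", OF _ _ pos])
    show "integrable M (\<lambda>x. indicator {0<..} x * min 1 (d / x))"
      "integrable M (\<lambda>x. indicator {0<..} x * min 1 (d' / x))"
      using M d by (auto intro: Lmu_integrable)
    show "{d<..} \<in> sets M" using sets by simp
    show "AE x in M. x \<in> {d<..} \<longrightarrow> indicator {0<..} x * min 1 (d / x) \<noteq> indicator {0<..} x * min 1 (d' / x)"
    proof (intro AE_I2 impI)
      fix x :: real assume "x \<in> {d<..}"
      then have "0 < x" "d / x < 1" "d / x < d' / x" using d by (auto simp: divide_strict_right_mono)
      then show "indicator {0<..} x * min 1 (d / x) \<noteq> indicator {0<..} x * min 1 (d' / x)"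
        using d(2) by (simp add: min_def)
    qed
    show "AE x in M. indicator {0<..} x * min 1 (d / x) \<le> indicator {0<..} x * min 1 (d' / x)"
    proof (intro AE_I2)
      fix x :: real
      have "0 < x \<Longrightarrow> min 1 (d / x) \<le> min 1 (d' / x)"
        using d by (intro min.mono divide_right_mono) auto
      then show "indicator {0<..} x * min 1 (d / x) \<le> indicator {0<..} x * min 1 (d' / x)"
        by (simp add: indicator_def)
    qed
  qed
qed

lemma delta_eqI:
  assumes "prob_on_pos M" "0 < d" "Lmu M d = c" "c < 1"
  shows "delta M c = d"
  unfolding delta_def
proof (rule the_equality)
  fix d' assume d': "0 < d' \<and> Lmu M d' = c"
  show "d' = d"
  proof (rule linorder_cases[of d' d])
    assume "d' < d"
    then show ?thesis using Lmu_strict_mono[of M d' d] assms d' by simp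
  next
    assume "d < d'"
    then show ?thesis using Lmu_strict_mono[of M d d'] assms d' by simp
  qed
qed (use assms in simp)

definition two_point :: "real \<Rightarrow> real \<Rightarrow> real \<Rightarrow> real measure" where
  "two_point p a b = distr (measure_pmf (bernoulli_pmf p)) borel (\<lambda>x. if x then a else b)"

context
  fixes p a b :: real
  assumes p: "0 \<le> p" "p \<le> 1" and ab: "0 < a" "0 < b"
begin

lemma prob_on_pos_two_point: "prob_on_pos (two_point p a b)"
proof -
  have "emeasure (two_point p a b) {0<..}
      = emeasure (measure_pmf (bernoulli_pmf p)) ((\<lambda>x. if x then a else b) -` {0<..} \<inter> UNIV)"
    unfolding two_point_def by (subst emeasure_distr) auto
  also have "(\<lambda>x. if x then a else b) -` {0<..} \<inter> UNIV = UNIV" using ab by auto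
  finally show ?thesis
    unfolding prob_on_pos_def two_point_def
    by (simp add: measure_pmf.prob_space_distr measure_pmf.emeasure_space_1)
qed

lemma mom_two_point:
  "mom (two_point p a b) k = ennreal (p * a powr (k - 2) + (1 - p) * b powr (k - 2))"
proof -
  have "mom (two_point p a b) k = ennreal (a powr (k - 2)) * p + ennreal (b powr (k - 2)) * (1 - p)"
    unfolding mom_def two_point_def using p ab by (subst nn_integral_distr) auto
  also have "\<dots> = ennreal (p * a powr (k - 2) + (1 - p) * b powr (k - 2))"
    using p by (simp add: ennreal_plus[symmetric] ennreal_mult[symmetric] mult.commute del: ennreal_plus)
  finally show ?thesis .
qed

lemma Lmu_two_point: "Lmu (two_point p a b) d = p * min 1 (d / a) + (1 - p) * min 1 (d / b)"
  unfolding Lmu_def two_point_def using p ab by (subst integral_distr) auto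

end

lemma two_point_parameters:
  fixes c m1 m3 :: real
  assumes c: "1/2 < c" "c < 1" and m: "0 < m1" "0 < m3" "1 \<le> m3 * m1"
  obtains p a b where "0 \<le> p" "p < 1" "0 < a" "a < b"
    "p * a + (1 - p) * b = m3" "p / a + (1 - p) / b = m1"
    "p + (1 - p) * ((a + b) / 2 / b) = c"
    "(a + b) / 2 = (m3 - (2*c - 1)^2 / m1) / (4 * (1 - c))"
proof
  define e where "e = 2*c - 1"
  define K where "K = m3 * m1"
  define D where "D = (K - 1) + (1 - e)^2"
  have e: "0 < e" "e < 1" and K: "1 \<le> K" using c m by (auto simp: e_def K_def)
  have "0 < D" using e K unfolding D_def by (smt (verit) zero_less_power)
  have "0 < K - e" using e K by simp
  define p where "p = e * (K - 1) / D"
  define a where "a = e / m1"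
  define b where "b = (K - e) / (m1 * (1 - e))"
  have q: "1 - p = (1 - e) * (K - e) / D"
    using \<open>0 < D\<close> by (simp add: p_def D_def field_simps power2_eq_square)
  have sum: "a + b = (K - e^2) / (m1 * (1 - e))"
    using e m by (simp add: a_def b_def field_simps power2_eq_square)
  show "0 \<le> p" using e K \<open>0 < D\<close> by (simp add: p_def)
  have "0 < (1 - e) * (K - e) / D" using e \<open>0 < K - e\<close> \<open>0 < D\<close> by simp
  then show "p < 1" using q by linarith
  show "0 < a" using e m by (simp add: a_def)
  have "b - a = D / (m1 * (1 - e))"
    using e m by (simp add: a_def b_def D_def field_simps power2_eq_square)
  moreover have "0 < D / (m1 * (1 - e))" using \<open>0 < D\<close> e m by simp
  ultimately show "a < b" by linarith
  have "p * a + (1 - p) * b = (e^2 * (K - 1) + (K - e)^2) / (D * m1)"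
    unfolding q using e by (simp add: p_def a_def b_def add_divide_distrib power2_eq_square)
  also have "e^2 * (K - 1) + (K - e)^2 = K * D" by (simp add: D_def power2_eq_square algebra_simps)
  finally show "p * a + (1 - p) * b = m3"
    using \<open>0 < D\<close> m by (simp add: K_def)
  have qb: "(1 - p) / b = m1 * (1 - e)^2 / D"
    unfolding q b_def using e \<open>0 < K - e\<close> by (simp add: power2_eq_square)
  have "p / a = m1 * (K - 1) / D" using e by (simp add: p_def a_def)
  then have "p / a + (1 - p) / b = m1 * D / D"
    unfolding qb by (simp add: D_def add_divide_distrib[symmetric] algebra_simps)
  then show "p / a + (1 - p) / b = m1" using \<open>0 < D\<close> by simp
  have "(1 - p) * ((a + b) / 2 / b) = (1 - p) / b * (a + b) / 2" by simp
  also have "\<dots> = (1 - e) * (K - e^2) / (2 * D)"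
    unfolding qb sum using e m by (simp add: power2_eq_square)
  finally have upper: "(1 - p) * ((a + b) / 2 / b) = (1 - e) * (K - e^2) / (2 * D)" .
  have "p + (1 - p) * ((a + b) / 2 / b) = (2 * e * (K - 1) + (1 - e) * (K - e^2)) / (2 * D)"
    unfolding upper using \<open>0 < D\<close> by (simp add: p_def field_simps)
  also have "2 * e * (K - 1) + (1 - e) * (K - e^2) = (1 + e) * D"
    by (simp add: D_def power2_eq_square algebra_simps)
  finally show "p + (1 - p) * ((a + b) / 2 / b) = c"
    using \<open>0 < D\<close> by (simp add: e_def)
  show "(a + b) / 2 = (m3 - (2*c - 1)^2 / m1) / (4 * (1 - c))"
    unfolding sum e_def[symmetric] using m e by (simp add: K_def e_def field_simps)
qed

theorem proposition1:
  shows "(\<forall>c::real. \<forall>m3::real. 0 < c \<and> c \<le> 1/2 \<and> 0 < m3 \<longrightarrow>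
            (\<exists>M. prob_on_pos M \<and> mom M 3 = ennreal m3 \<and> delta M c = c * m3))
       \<and> (\<forall>c::real. \<forall>m3::real. \<forall>m1::real.
            1/2 < c \<and> c < 1 \<and> 0 < m3 \<and> 0 < m1 \<and> m3 * m1 \<ge> 1 \<longrightarrow>
            (\<exists>M. prob_on_pos M \<and> mom M 3 = ennreal m3 \<and> mom M 1 = ennreal m1 \<and>
                 delta M c = (m3 - (2*c - 1)^2 / m1) / (4 * (1 - c))))"
proof (intro conjI allI impI)
  fix c m3 :: real
  assume "0 < c \<and> c \<le> 1/2 \<and> 0 < m3"
  then have c: "0 < c" "c < 1" and m3: "0 < m3" by auto
  let ?M = "two_point 0 m3 m3"
  have "prob_on_pos ?M" using m3 by (simp add: prob_on_pos_two_point)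
  moreover have "delta ?M c = c * m3"
    using c m3 \<open>prob_on_pos ?M\<close> by (intro delta_eqI) (auto simp: Lmu_two_point)
  ultimately show "\<exists>M. prob_on_pos M \<and> mom M 3 = ennreal m3 \<and> delta M c = c * m3"
    using m3 by (auto simp: mom_two_point)
next
  fix c m3 m1 :: real
  assume hyp: "1/2 < c \<and> c < 1 \<and> 0 < m3 \<and> 0 < m1 \<and> m3 * m1 \<ge> 1"
  then obtain p a b where p: "0 \<le> p" "p < 1" and ab: "0 < a" "a < b"
    and moments: "p * a + (1 - p) * b = m3" "p / a + (1 - p) / b = m1"
    and root: "p + (1 - p) * ((a + b) / 2 / b) = c"
    and midpoint: "(a + b) / 2 = (m3 - (2*c - 1)^2 / m1) / (4 * (1 - c))"
    using two_point_parameters by blast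
  let ?M = "two_point p a b"
  have M: "prob_on_pos ?M" using p ab by (simp add: prob_on_pos_two_point)
  have "Lmu ?M ((a + b) / 2) = c"
    using p ab root by (simp add: Lmu_two_point min_def field_simps)
  then have "delta ?M c = (a + b) / 2"
    using M ab hyp by (intro delta_eqI) auto
  then show "\<exists>M. prob_on_pos M \<and> mom M 3 = ennreal m3 \<and> mom M 1 = ennreal m1 \<and>
                 delta M c = (m3 - (2*c - 1)^2 / m1) / (4 * (1 - c))"
    using M p ab moments midpoint by (auto simp: mom_two_point powr_minus_divide)
qed

end
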